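(* For every integer $c\ge1$ there exists $\epsilon(c)>0$ with the following property. Let $\{U_\alpha\}_{\alpha\in\mathcal A}$ be a family of open subsets of $\mathbb R^c$ covering $[0,1]^c$ with $\mathrm{diam}(U_\alpha)<\epsilon(c)$ for all $\alpha$, and let $f:[0,1]^c\to\mathbb R^c$ be continuous. Suppose that for every $x\in[0,1]^c$ there is a subset $\mathcal I\subset\mathcal A$ such that $x\in U_\alpha$ for all $\alpha\in\mathcal I$ and $\bigcap_{\alpha\in\mathcal I}f(\partial U_\alpha\cap[0,1]^c)=\emptyset$. Then $f$ has a stable value.
   Context: For a continuous map $f:X\to Z$ between metric spaces, $z\in Z$ is a stable value if there is $\epsilon>0$ such that $z\in g(X)$ for every continuous $g:X\to Z$ with $\sup_x d(f(x),g(x))<\epsilon$. *)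

theory Defs
  imports "HOL-Analysis.Analysis"
begin

definition stable_value :: "'a::metric_space set \<Rightarrow> ('a \<Rightarrow> 'b::metric_space) \<Rightarrow> 'b \<Rightarrow> bool" where
  "stable_value X f z \<longleftrightarrow>
     (\<exists>e>0. \<forall>g. continuous_on X g \<and> bdd_above ((\<lambda>x. dist (f x) (g x)) ` X)
                  \<and> (SUP x\<in>X. dist (f x) (g x)) < e \<longrightarrow> z \<in> g ` X)"

end

theory Submission
  imports Defs
begin

text \<open>If \<open>f\<close> has no stable value, it can be perturbed by less than any given amount into a map \<open>F\<close>
  with negligible image: first avoid the finitely many centres of a fine cubical grid that lie near
  \<open>f(K)\<close> (each value can be avoided, and well separated values simultaneously), then project
  radially from the centres onto the grid hyperplanes. A Lebesgue-number argument puts every \<open>x\<close> in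
  some \<open>U \<in> \<U>\<close> whose frontier \<open>F\<close> maps uniformly far from a given value \<open>y\<close>, so the component
  through \<open>x\<close> of \<open>{x'. F x'\<close> near \<open>y}\<close> stays inside \<open>U\<close>. Choosing one point per component and
  averaging over a partition of unity on \<open>F(K)\<close> yields a map \<open>h\<close> within \<open>1/4\<close> of the identity whose
  image lies in finitely many Lipschitz images of \<open>F(K)\<close>; so \<open>h(K)\<close> is negligible, whereas by
  Brouwer's theorem it contains a ball.\<close>

section \<open>Lipschitz maps and negligible images\<close>

lemma lipschitz_on_sum:
  fixes f :: "'i \<Rightarrow> 'a::metric_space \<Rightarrow> 'b::real_normed_vector"
  assumes "\<And>i. i \<in> I \<Longrightarrow> (C i)-lipschitz_on U (f i)"
  shows "(\<Sum>i\<in>I. C i)-lipschitz_on U (\<lambda>x. \<Sum>i\<in>I. f i x)"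
  using assms
proof (induction I rule: infinite_finite_induct)
  case (insert i I)
  then show ?case by (simp add: lipschitz_on_add)
qed (simp_all add: lipschitz_on_constant)

lemma lipschitz_on_scaleR_const:
  fixes g :: "'a::metric_space \<Rightarrow> real"
  assumes "C-lipschitz_on U g"
  shows "(C * norm a)-lipschitz_on U (\<lambda>x. g x *\<^sub>R a)"
proof (rule lipschitz_onI)
  fix x y assume "x \<in> U" "y \<in> U"
  then have "\<bar>g x - g y\<bar> * norm a \<le> C * dist x y * norm a"
    using lipschitz_onD[OF assms] by (intro mult_right_mono) (auto simp: dist_real_def)
  then show "dist (g x *\<^sub>R a) (g y *\<^sub>R a) \<le> C * norm a * dist x y"
    by (simp add: dist_norm flip: scaleR_diff_left) (simp add: mult_ac)
qed (use lipschitz_on_nonneg[OF assms] in simp)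

lemma lipschitz_on_inverse_scaleR:
  fixes N :: "'a::metric_space \<Rightarrow> 'b::real_normed_vector" and D :: "'a \<Rightarrow> real"
  assumes N: "A-lipschitz_on S N" and D: "B-lipschitz_on S D" and d: "d > 0"
    and bounds: "\<And>v. v \<in> S \<Longrightarrow> d \<le> D v \<and> D v \<le> M \<and> norm (N v) \<le> M'"
    and "0 \<le> M" "0 \<le> M'"
  shows "((M * A + B * M') / d\<^sup>2)-lipschitz_on S (\<lambda>v. (1 / D v) *\<^sub>R N v)"
proof (rule lipschitz_onI)
  have "0 \<le> A" "0 \<le> B" using N D by (simp_all add: lipschitz_on_nonneg)
  with \<open>0 \<le> M\<close> \<open>0 \<le> M'\<close> show "0 \<le> (M * A + B * M') / d\<^sup>2" by simp
  fix u v assume u: "u \<in> S" and v: "v \<in> S"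
  have Du: "d \<le> D u" and Dv: "d \<le> D v" "D v \<le> M" and Nv: "norm (N v) \<le> M'"
    using bounds u v by auto
  have "(1 / D u) *\<^sub>R N u - (1 / D v) *\<^sub>R N v
        = (1 / (D u * D v)) *\<^sub>R (D v *\<^sub>R (N u - N v) + (D v - D u) *\<^sub>R N v)"
    using Du Dv d by (simp add: algebra_simps)
  then have "dist ((1 / D u) *\<^sub>R N u) ((1 / D v) *\<^sub>R N v)
        = (1 / (D u * D v)) * norm (D v *\<^sub>R (N u - N v) + (D v - D u) *\<^sub>R N v)"
    using Du Dv d by (simp add: dist_norm)
  also have "\<dots> \<le> (1 / d\<^sup>2) * ((M * A + B * M') * dist u v)"
  proof (rule mult_mono)
    show "1 / (D u * D v) \<le> 1 / d\<^sup>2"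
      using Du Dv d by (simp add: power2_eq_square frac_le mult_mono)
    have "norm (D v *\<^sub>R (N u - N v) + (D v - D u) *\<^sub>R N v)
          \<le> D v * norm (N u - N v) + \<bar>D u - D v\<bar> * norm (N v)"
      using Dv d by (simp add: norm_triangle_le abs_minus_commute)
    also have "\<dots> \<le> M * (A * dist u v) + (B * dist u v) * M'"
      using lipschitz_on_normD lipschitz_onD[OF N u v] lipschitz_onD[OF D u v] Dv Nv d
      by (intro add_mono mult_mono) (auto simp: dist_norm dist_real_def)
    finally show "norm (D v *\<^sub>R (N u - N v) + (D v - D u) *\<^sub>R N v) \<le> (M * A + B * M') * dist u v"
      by (simp add: algebra_simps)
  qed (use Du d in auto)
  finally show "dist ((1 / D u) *\<^sub>R N u) ((1 / D v) *\<^sub>R N v) \<le> (M * A + B * M') / d\<^sup>2 * dist u v"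
    by simp
qed

lemma norm_weighted_average_diff_le:
  fixes p :: "'b \<Rightarrow> 'a::real_normed_vector"
  assumes w: "\<And>y. y \<in> Y \<Longrightarrow> 0 \<le> w y" and W: "0 < (\<Sum>y\<in>Y. w y)"
    and close: "\<And>y. y \<in> Y \<Longrightarrow> 0 < w y \<Longrightarrow> norm (p y - x) \<le> \<delta>"
  shows "norm ((1 / (\<Sum>y\<in>Y. w y)) *\<^sub>R (\<Sum>y\<in>Y. w y *\<^sub>R p y) - x) \<le> \<delta>"
proof -
  have "(1 / (\<Sum>y\<in>Y. w y)) *\<^sub>R (\<Sum>y\<in>Y. w y *\<^sub>R p y) - x
      = (1 / (\<Sum>y\<in>Y. w y)) *\<^sub>R (\<Sum>y\<in>Y. w y *\<^sub>R (p y - x))"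
    using W by (simp add: scaleR_diff_right sum_subtractf flip: scaleR_sum_left)
  moreover have "norm (\<Sum>y\<in>Y. w y *\<^sub>R (p y - x)) \<le> (\<Sum>y\<in>Y. w y) * \<delta>"
  proof -
    have "norm (\<Sum>y\<in>Y. w y *\<^sub>R (p y - x)) \<le> (\<Sum>y\<in>Y. w y * norm (p y - x))"
      using norm_sum[of "\<lambda>y. w y *\<^sub>R (p y - x)" Y] w by simp
    also have "\<dots> \<le> (\<Sum>y\<in>Y. w y * \<delta>)"
    proof (rule sum_mono)
      fix y assume y: "y \<in> Y"
      show "w y * norm (p y - x) \<le> w y * \<delta>"
      proof (cases "w y = 0")
        case False
        with w[OF y] have "0 < w y" by simp
        with close[OF y] show ?thesis by (simp add: mult_left_mono)
      qed simp
    qed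
    finally show ?thesis by (simp add: sum_distrib_right)
  qed
  ultimately show ?thesis using W by (simp add: field_simps)
qed

lemma negligible_weighted_average_image:
  fixes \<theta> :: "'b \<Rightarrow> 'a::euclidean_space \<Rightarrow> real" and p :: "'b \<Rightarrow> 'a"
  assumes T: "negligible T" and Y: "finite Y" and d: "d > 0"
    and lip: "\<And>y. y \<in> Y \<Longrightarrow> 1-lipschitz_on T (\<theta> y)"
    and bound: "\<And>y v. y \<in> Y \<Longrightarrow> v \<in> T \<Longrightarrow> \<bar>\<theta> y v\<bar> \<le> b"
    and pos: "\<And>v. v \<in> T \<Longrightarrow> d \<le> (\<Sum>y\<in>Y. \<theta> y v)"
  shows "negligible ((\<lambda>v. (1 / (\<Sum>y\<in>Y. \<theta> y v)) *\<^sub>R (\<Sum>y\<in>Y. \<theta> y v *\<^sub>R p y)) ` T)"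
proof (cases "T = {}")
  case False
  then obtain v where v: "v \<in> T" by blast
  then have "Y \<noteq> {}" using pos d by fastforce
  then obtain y where "y \<in> Y" by blast
  then have b: "0 \<le> b" using bound[of y v] v by linarith
  have N: "(\<Sum>y\<in>Y. 1 * norm (p y))-lipschitz_on T (\<lambda>v. \<Sum>y\<in>Y. \<theta> y v *\<^sub>R p y)"
    by (intro lipschitz_on_sum lipschitz_on_scaleR_const lip)
  have D: "(\<Sum>y\<in>Y. 1)-lipschitz_on T (\<lambda>v. \<Sum>y\<in>Y. \<theta> y v)"
    by (intro lipschitz_on_sum lip)
  have bounds: "d \<le> (\<Sum>y\<in>Y. \<theta> y v) \<and> (\<Sum>y\<in>Y. \<theta> y v) \<le> card Y * b
      \<and> norm (\<Sum>y\<in>Y. \<theta> y v *\<^sub>R p y) \<le> b * (\<Sum>y\<in>Y. norm (p y))" if "v \<in> T" for v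
  proof (intro conjI)
    show "(\<Sum>y\<in>Y. \<theta> y v) \<le> card Y * b"
      using sum_bounded_above[of Y "\<lambda>y. \<theta> y v" b] bound that by fastforce
    have "norm (\<Sum>y\<in>Y. \<theta> y v *\<^sub>R p y) \<le> (\<Sum>y\<in>Y. \<bar>\<theta> y v\<bar> * norm (p y))"
      using norm_sum[of "\<lambda>y. \<theta> y v *\<^sub>R p y" Y] by simp
    also have "\<dots> \<le> (\<Sum>y\<in>Y. b * norm (p y))"
      using bound that by (intro sum_mono mult_right_mono) auto
    finally show "norm (\<Sum>y\<in>Y. \<theta> y v *\<^sub>R p y) \<le> b * (\<Sum>y\<in>Y. norm (p y))"
      by (simp add: sum_distrib_left)
  qed (use pos that in auto)
  have "0 \<le> card Y * b" "0 \<le> b * (\<Sum>y\<in>Y. norm (p y))"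
    using b by (simp_all add: sum_nonneg)
  from lipschitz_on_inverse_scaleR[OF N D d bounds this] obtain L where L: "L-lipschitz_on T
      (\<lambda>v. (1 / (\<Sum>y\<in>Y. \<theta> y v)) *\<^sub>R (\<Sum>y\<in>Y. \<theta> y v *\<^sub>R p y))"
    by blast
  show ?thesis
    by (rule negligible_locally_Lipschitz_image[OF order_refl T])
      (use lipschitz_on_normD[OF L] in \<open>intro exI[of _ UNIV] exI[of _ L], auto\<close>)
qed simp

definition tent :: "real \<Rightarrow> 'a::metric_space \<Rightarrow> 'a \<Rightarrow> real" where
  "tent \<rho> y v = max 0 (\<rho> - dist v y)"

lemma tent_nonneg: "0 \<le> tent \<rho> y v"
  by (simp add: tent_def)

lemma tent_le: "0 \<le> \<rho> \<Longrightarrow> tent \<rho> y v \<le> \<rho>"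
  by (simp add: tent_def)

lemma tent_pos_iff: "0 < tent \<rho> y v \<longleftrightarrow> dist v y < \<rho>"
  by (simp add: tent_def less_max_iff_disj)

lemma lipschitz_on_tent: "1-lipschitz_on T (tent \<rho> y)"
proof (rule lipschitz_onI)
  fix u v
  have "\<bar>dist u y - dist v y\<bar> \<le> dist u v" using abs_dist_diff_le[of u y v] by (simp add: dist_commute)
  then show "dist (tent \<rho> y u) (tent \<rho> y v) \<le> 1 * dist u v" by (simp add: tent_def dist_real_def)
qed simp

lemma continuous_on_tent: "continuous_on T (tent \<rho> y)"
  unfolding tent_def by (intro continuous_intros)

lemma tent_cover_of_compact:
  assumes T: "compact T" and \<rho>: "0 < \<rho>"
  obtains Y d where "finite Y" "Y \<subseteq> T" "0 < d" "\<And>v. v \<in> T \<Longrightarrow> d \<le> (\<Sum>y\<in>Y. tent \<rho> y v)"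
proof -
  obtain Y where Y: "Y \<subseteq> T" "finite Y" "T \<subseteq> (\<Union>y\<in>Y. ball y \<rho>)"
    using compactE_image[OF T, of T "\<lambda>y. ball y \<rho>"] \<rho> by force
  have pos: "0 < (\<Sum>y\<in>Y. tent \<rho> y v)" if v: "v \<in> T" for v
  proof -
    have "v \<in> (\<Union>y\<in>Y. ball y \<rho>)" using Y(3) v by blast
    then obtain y where y: "y \<in> Y" "dist v y < \<rho>" by (auto simp: dist_commute)
    then have "0 < tent \<rho> y v" by (simp add: tent_pos_iff)
    also have "\<dots> \<le> (\<Sum>y\<in>Y. tent \<rho> y v)"
      using Y(2) y(1) tent_nonneg by (intro member_le_sum) auto
    finally show ?thesis .
  qed
  show ?thesis
  proof (cases "T = {}")
    case False
    have "continuous_on T (\<lambda>v. \<Sum>y\<in>Y. tent \<rho> y v)" by (intro continuous_on_sum continuous_on_tent)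
    then obtain v0 where "v0 \<in> T" "\<And>v. v \<in> T \<Longrightarrow> (\<Sum>y\<in>Y. tent \<rho> y v0) \<le> (\<Sum>y\<in>Y. tent \<rho> y v)"
      using continuous_attains_inf[OF T False] by blast
    with pos Y(1,2) that show ?thesis by blast
  qed (use that[of Y 1] Y in auto)
qed

text \<open>Where its weight is positive, each selection \<open>c\<^sub>y\<close> takes only finitely many values; so the
  average ranges over finitely many Lipschitz images of the negligible set \<open>F(K)\<close>.\<close>

lemma negligible_image_tent_average:
  fixes F :: "'k \<Rightarrow> 'a::euclidean_space" and c :: "'a \<Rightarrow> 'k \<Rightarrow> 'a"
  assumes negF: "negligible (F ` K)" and Y: "finite Y" and \<rho>: "0 \<le> \<rho>"
    and d: "0 < d" "\<And>v. v \<in> F ` K \<Longrightarrow> d \<le> (\<Sum>y\<in>Y. tent \<rho> y v)"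
    and fin: "\<And>y. y \<in> Y \<Longrightarrow> finite (c y ` {x\<in>K. dist (F x) y \<le> \<rho>})"
  shows "negligible ((\<lambda>x. (1 / (\<Sum>y\<in>Y. tent \<rho> y (F x))) *\<^sub>R (\<Sum>y\<in>Y. tent \<rho> y (F x) *\<^sub>R c y x)) ` K)"
    (is "negligible (?h ` K)")
proof -
  let ?L = "\<lambda>\<phi> v. (1 / (\<Sum>y\<in>Y. tent \<rho> y v)) *\<^sub>R (\<Sum>y\<in>Y. tent \<rho> y v *\<^sub>R \<phi> y)"
  define \<Phi> where "\<Phi> = PiE Y (\<lambda>y. insert 0 (c y ` {x\<in>K. dist (F x) y \<le> \<rho>}))"
  have "finite \<Phi>" unfolding \<Phi>_def using Y fin by (intro finite_PiE) auto
  have cover: "?h ` K \<subseteq> (\<Union>\<phi>\<in>\<Phi>. ?L \<phi> ` F ` K)"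
  proof
    fix p assume "p \<in> ?h ` K"
    then obtain x where x: "x \<in> K" "p = ?h x" by blast
    define \<phi> where "\<phi> = restrict (\<lambda>y. if 0 < tent \<rho> y (F x) then c y x else 0) Y"
    have "\<phi> \<in> \<Phi>" using x(1) by (auto simp: \<Phi>_def \<phi>_def tent_pos_iff dist_commute less_imp_le)
    moreover have "(\<Sum>y\<in>Y. tent \<rho> y (F x) *\<^sub>R c y x) = (\<Sum>y\<in>Y. tent \<rho> y (F x) *\<^sub>R \<phi> y)"
    proof (rule sum.cong)
      fix y assume "y \<in> Y"
      then show "tent \<rho> y (F x) *\<^sub>R c y x = tent \<rho> y (F x) *\<^sub>R \<phi> y"
        using tent_nonneg[of \<rho> y "F x"] by (cases "tent \<rho> y (F x) = 0") (auto simp: \<phi>_def)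
    qed simp
    ultimately show "p \<in> (\<Union>\<phi>\<in>\<Phi>. ?L \<phi> ` F ` K)" using x by auto
  qed
  have "negligible (?L \<phi> ` F ` K)" for \<phi> :: "'a \<Rightarrow> 'a"
    by (rule negligible_weighted_average_image[OF negF Y d(1), where b=\<rho>])
      (use lipschitz_on_tent tent_le[OF \<rho>] d(2) in \<open>auto simp: abs_of_nonneg[OF tent_nonneg]\<close>)
  then have "negligible (\<Union>\<phi>\<in>\<Phi>. ?L \<phi> ` F ` K)"
    using \<open>finite \<Phi>\<close> by (intro negligible_Union finite_imageI) auto
  then show ?thesis using cover by (rule negligible_subset)
qed

lemma continuous_on_cutoff_scaleR:
  fixes \<phi> :: "'a::topological_space \<Rightarrow> real" and g :: "'a \<Rightarrow> 'b::real_normed_vector"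
  assumes S: "closed S" and \<phi>: "continuous_on S \<phi>" and g: "continuous_on V g"
    and A: "closed A" "A \<subseteq> S" "A \<subseteq> V" and vanish: "\<And>x. x \<in> S \<Longrightarrow> x \<notin> A \<Longrightarrow> \<phi> x = 0"
  shows "continuous_on S (\<lambda>x. \<phi> x *\<^sub>R g x)"
proof -
  define B where "B = {x \<in> S. \<phi> x = 0}"
  have "closed B" unfolding B_def by (rule continuous_closed_preimage_constant[OF \<phi> S])
  have "continuous_on A (\<lambda>x. \<phi> x *\<^sub>R g x)"
    by (intro continuous_intros continuous_on_subset[OF \<phi> A(2)] continuous_on_subset[OF g A(3)])
  moreover have "continuous_on B (\<lambda>x. \<phi> x *\<^sub>R g x)"
    by (rule continuous_on_eq[OF continuous_on_const[of B 0]]) (simp add: B_def)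
  moreover have "S = A \<union> B" using A(2) vanish by (auto simp: B_def)
  ultimately show ?thesis using continuous_on_closed_Un[OF A(1) \<open>closed B\<close>] by simp
qed

lemma continuous_on_tent_average:
  fixes F :: "'a::metric_space \<Rightarrow> 'b::metric_space" and c :: "'b \<Rightarrow> 'a \<Rightarrow> 'c::real_normed_vector"
  assumes K: "closed K" and F: "continuous_on K F" and "\<rho> < r"
    and c: "\<And>y. y \<in> Y \<Longrightarrow> continuous_on {x\<in>K. dist (F x) y < r} (c y)"
    and pos: "\<And>x. x \<in> K \<Longrightarrow> 0 < (\<Sum>y\<in>Y. tent \<rho> y (F x))"
  shows "continuous_on K (\<lambda>x. (1 / (\<Sum>y\<in>Y. tent \<rho> y (F x))) *\<^sub>R (\<Sum>y\<in>Y. tent \<rho> y (F x) *\<^sub>R c y x))"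
proof -
  have tent_F: "continuous_on K (\<lambda>x. tent \<rho> y (F x))" for y
    by (rule continuous_on_compose2[OF continuous_on_tent F]) auto
  have "continuous_on K (\<lambda>x. tent \<rho> y (F x) *\<^sub>R c y x)" if "y \<in> Y" for y
  proof (rule continuous_on_cutoff_scaleR[OF K tent_F c[OF that]])
    have "{x\<in>K. dist (F x) y \<le> \<rho>} = K \<inter> F -` cball y \<rho>" by (auto simp: dist_commute)
    then show "closed {x\<in>K. dist (F x) y \<le> \<rho>}"
      using continuous_closed_preimage[OF F K, of "cball y \<rho>"] by simp
  qed (use \<open>\<rho> < r\<close> in \<open>auto simp: tent_def\<close>)
  then have "continuous_on K (\<lambda>x. \<Sum>y\<in>Y. tent \<rho> y (F x) *\<^sub>R c y x)"
    by (rule continuous_on_sum)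
  moreover have "continuous_on K (\<lambda>x. \<Sum>y\<in>Y. tent \<rho> y (F x))"
    by (intro continuous_on_sum tent_F)
  then have "continuous_on K (\<lambda>x. 1 / (\<Sum>y\<in>Y. tent \<rho> y (F x)))"
    by (rule continuous_on_divide[OF continuous_on_const]) (use pos in force)
  ultimately show ?thesis by (rule continuous_on_scaleR[rotated])
qed

section \<open>Maps close to the identity with negligible image\<close>

lemma locally_connected_component_selection:
  assumes S: "locally connected S"
  obtains c where "continuous_on S c" "\<And>x. x \<in> S \<Longrightarrow> c x \<in> connected_component_set S x"
    "\<And>A. compact A \<Longrightarrow> A \<subseteq> S \<Longrightarrow> finite (c ` A)"
proof
  define c where "c x = (SOME p. p \<in> connected_component_set S x)" for x
  show "c x \<in> connected_component_set S x" if "x \<in> S" for x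
    unfolding c_def by (rule someI[of _ x]) (simp add: that)
  have c_eq: "c a = c x" if "a \<in> connected_component_set S x" for a x
    using connected_component_eq[OF that] by (simp add: c_def)
  show "continuous_on S c"
  proof (rule continuous_on_components[OF S])
    fix C assume "C \<in> components S"
    then obtain x where "C = connected_component_set S x" by (auto simp: components_def)
    then show "continuous_on C c"
      by (intro continuous_on_eq[OF continuous_on_const[of C "c x"]]) (simp add: c_eq)
  qed
  fix A assume A: "compact A" "A \<subseteq> S"
  have "\<exists>G. open G \<and> connected_component_set S x = S \<inter> G" if "x \<in> S" for x
    using openin_components_locally_connected[OF S componentsI[OF that]] by (simp add: openin_open)
  then have "\<forall>x\<in>A. \<exists>G. open G \<and> connected_component_set S x = S \<inter> G" using A(2) by blast
  from bchoice[OF this] obtain G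
    where G: "\<And>x. x \<in> A \<Longrightarrow> open (G x) \<and> connected_component_set S x = S \<inter> G x"
    by blast
  have xG: "x \<in> G x" if "x \<in> A" for x
  proof -
    have "x \<in> connected_component_set S x" using A(2) that by auto
    with G[OF that] show ?thesis by blast
  qed
  obtain X where X: "X \<subseteq> A" "finite X" "A \<subseteq> (\<Union>x\<in>X. G x)"
  proof (rule compactE_image[OF A(1)])
    show "open (G x)" if "x \<in> A" for x using G[OF that] by blast
    show "A \<subseteq> (\<Union>x\<in>A. G x)" using xG by blast
  qed
  have "c ` A \<subseteq> c ` X"
  proof
    fix p assume "p \<in> c ` A"
    then obtain a x where a: "a \<in> A" "p = c a" and x: "x \<in> X" "a \<in> G x" using X(3) by blast
    have "a \<in> connected_component_set S x" using G[of x] X(1) A(2) a(1) x by blast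
    then show "p \<in> c ` X" using c_eq a(2) x(1) by blast
  qed
  then show "finite (c ` A)" using X(2) finite_subset by blast
qed

text \<open>A component of \<open>{x \<in> K. dist (F x) y < r}\<close> cannot cross the frontier of a set \<open>U\<close> whose
  frontier \<open>F\<close> keeps at distance \<open>r\<close> from \<open>y\<close>; so it stays in \<open>U\<close> and has diameter at most \<open>\<delta>\<close>.\<close>

lemma frontier_separated_component_selection:
  fixes F :: "'a::real_normed_vector \<Rightarrow> 'b::metric_space"
  assumes K: "convex K" and F: "continuous_on K F"
    and small: "\<And>U. U \<in> \<U> \<Longrightarrow> bounded U \<and> diameter U \<le> \<delta>"
    and sep: "\<And>x. x \<in> K \<Longrightarrow> \<exists>U\<in>\<U>. x \<in> U \<and> (\<forall>x'\<in>K \<inter> frontier U. r \<le> dist (F x') y)"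
  shows "\<exists>c. continuous_on {x\<in>K. dist (F x) y < r} c
      \<and> (\<forall>x\<in>K. dist (F x) y < r \<longrightarrow> dist (c x) x \<le> \<delta>)
      \<and> (\<forall>A. compact A \<and> A \<subseteq> {x\<in>K. dist (F x) y < r} \<longrightarrow> finite (c ` A))"
proof -
  define V where "V = {x\<in>K. dist (F x) y < r}"
  have "V = K \<inter> F -` ball y r" by (auto simp: V_def dist_commute)
  then have "openin (top_of_set K) V" using continuous_openin_preimage_gen[OF F, of "ball y r"] by simp
  then have "locally connected V"
    by (rule locally_open_subset[OF convex_imp_locally_connected[OF K]])
  then obtain c where c: "continuous_on V c" "\<And>x. x \<in> V \<Longrightarrow> c x \<in> connected_component_set V x"
    "\<And>A. compact A \<Longrightarrow> A \<subseteq> V \<Longrightarrow> finite (c ` A)"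
    using locally_connected_component_selection by blast
  show ?thesis
  proof (intro exI[of _ c] conjI allI ballI impI)
    show "continuous_on {x\<in>K. dist (F x) y < r} c" using c(1) by (simp add: V_def)
    show "finite (c ` A)" if "compact A \<and> A \<subseteq> {x\<in>K. dist (F x) y < r}" for A
      using c(3) that by (simp add: V_def)
    fix x assume x: "x \<in> K" "dist (F x) y < r"
    define C where "C = connected_component_set V x"
    obtain U where U: "U \<in> \<U>" "x \<in> U" and far: "\<And>x'. x' \<in> K \<inter> frontier U \<Longrightarrow> r \<le> dist (F x') y"
      using sep[OF x(1)] by blast
    have C_frontier: "C \<inter> frontier U = {}"
    proof (rule ccontr)
      assume "C \<inter> frontier U \<noteq> {}"
      then obtain x' where x': "x' \<in> C" "x' \<in> frontier U" by blast
      then have "x' \<in> V" using connected_component_subset[of V x] by (auto simp: C_def)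
      with far[of x'] x'(2) show False by (simp add: V_def)
    qed
    have "x \<in> C" using x by (simp add: C_def V_def)
    with U(2) have "C \<inter> U \<noteq> {}" by blast
    then have "C \<subseteq> U"
      using connected_Int_frontier[of C U] C_frontier by (auto simp: C_def)
    moreover have "c x \<in> C" using c(2) x by (simp add: C_def V_def)
    ultimately have "c x \<in> U" by blast
    then show "dist (c x) x \<le> \<delta>"
      using diameter_bounded_bound[of U "c x" x] small[OF U(1)] U(2) by simp
  qed
qed

lemma near_identity_map_with_negligible_image:
  fixes F :: "'a::euclidean_space \<Rightarrow> 'a"
  assumes K: "compact K" "convex K" and F: "continuous_on K F" and negF: "negligible (F ` K)"
    and r: "r > 0" and small: "\<And>U. U \<in> \<U> \<Longrightarrow> bounded U \<and> diameter U \<le> \<delta>"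
    and sep: "\<And>x y. x \<in> K \<Longrightarrow> y \<in> F ` K \<Longrightarrow>
                \<exists>U\<in>\<U>. x \<in> U \<and> (\<forall>x'\<in>K \<inter> frontier U. r \<le> dist (F x') y)"
  obtains h where "continuous_on K h" "\<And>x. x \<in> K \<Longrightarrow> norm (h x - x) \<le> \<delta>" "negligible (h ` K)"
proof -
  define \<rho> where "\<rho> = r/2"
  have \<rho>: "0 < \<rho>" "\<rho> < r" using r by (simp_all add: \<rho>_def)
  obtain Y d where Y: "finite Y" "Y \<subseteq> F ` K"
    and d: "0 < d" "\<And>v. v \<in> F ` K \<Longrightarrow> d \<le> (\<Sum>y\<in>Y. tent \<rho> y v)"
    by (rule tent_cover_of_compact[OF compact_continuous_image[OF F K(1)] \<rho>(1)]) (rule that)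
  have "\<forall>y\<in>Y. \<exists>c. continuous_on {x\<in>K. dist (F x) y < r} c
      \<and> (\<forall>x\<in>K. dist (F x) y < r \<longrightarrow> dist (c x) x \<le> \<delta>)
      \<and> (\<forall>A. compact A \<and> A \<subseteq> {x\<in>K. dist (F x) y < r} \<longrightarrow> finite (c ` A))"
  proof
    fix y assume "y \<in> Y"
    then have "y \<in> F ` K" using Y(2) by blast
    then show "\<exists>c. continuous_on {x\<in>K. dist (F x) y < r} c
      \<and> (\<forall>x\<in>K. dist (F x) y < r \<longrightarrow> dist (c x) x \<le> \<delta>)
      \<and> (\<forall>A. compact A \<and> A \<subseteq> {x\<in>K. dist (F x) y < r} \<longrightarrow> finite (c ` A))"
      using sep by (intro frontier_separated_component_selection[OF K(2) F small])
  qed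
  from bchoice[OF this] obtain c where c: "\<forall>y\<in>Y. continuous_on {x\<in>K. dist (F x) y < r} (c y)
      \<and> (\<forall>x\<in>K. dist (F x) y < r \<longrightarrow> dist (c y x) x \<le> \<delta>)
      \<and> (\<forall>A. compact A \<and> A \<subseteq> {x\<in>K. dist (F x) y < r} \<longrightarrow> finite (c y ` A))"
    by blast
  have A_compact: "compact {x\<in>K. dist (F x) y \<le> \<rho>}" for y
  proof -
    have "{x\<in>K. dist (F x) y \<le> \<rho>} = K \<inter> F -` cball y \<rho>" by (auto simp: dist_commute)
    then have "closed {x\<in>K. dist (F x) y \<le> \<rho>}"
      using continuous_closed_preimage[OF F compact_imp_closed[OF K(1)], of "cball y \<rho>"] by simp
    then have "compact (K \<inter> {x\<in>K. dist (F x) y \<le> \<rho>})" by (rule compact_Int_closed[OF K(1)])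
    moreover have "K \<inter> {x\<in>K. dist (F x) y \<le> \<rho>} = {x\<in>K. dist (F x) y \<le> \<rho>}" by blast
    ultimately show ?thesis by simp
  qed
  define D where "D x = (\<Sum>y\<in>Y. tent \<rho> y (F x))" for x
  have D: "0 < D x" if "x \<in> K" for x using d that by (force simp: D_def)
  show ?thesis
  proof (rule that)
    show "continuous_on K (\<lambda>x. (1 / D x) *\<^sub>R (\<Sum>y\<in>Y. tent \<rho> y (F x) *\<^sub>R c y x))"
      unfolding D_def using c D \<rho>(2)
      by (intro continuous_on_tent_average[OF compact_imp_closed[OF K(1)] F]) (auto simp: D_def)
  next
    fix x assume x: "x \<in> K"
    show "norm ((1 / D x) *\<^sub>R (\<Sum>y\<in>Y. tent \<rho> y (F x) *\<^sub>R c y x) - x) \<le> \<delta>"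
      unfolding D_def
    proof (rule norm_weighted_average_diff_le)
      show "0 < (\<Sum>y\<in>Y. tent \<rho> y (F x))" using D[OF x] by (simp add: D_def)
      fix y assume "y \<in> Y" "0 < tent \<rho> y (F x)"
      then show "norm (c y x - x) \<le> \<delta>" using c x \<rho> by (simp add: tent_pos_iff dist_norm)
    qed (rule tent_nonneg)
  next
    show "negligible ((\<lambda>x. (1 / D x) *\<^sub>R (\<Sum>y\<in>Y. tent \<rho> y (F x) *\<^sub>R c y x)) ` K)"
    proof (unfold D_def, rule negligible_image_tent_average[OF negF Y(1) _ d])
      fix y assume "y \<in> Y"
      moreover have "{x\<in>K. dist (F x) y \<le> \<rho>} \<subseteq> {x\<in>K. dist (F x) y < r}" using \<rho> by auto
      ultimately show "finite (c y ` {x\<in>K. dist (F x) y \<le> \<rho>})" using c A_compact by blast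
    qed (use \<rho> in simp)
  qed
qed

lemma mem_image_near_identity:
  fixes h :: "'a::euclidean_space \<Rightarrow> 'a"
  assumes K: "compact K" "convex K" and h: "continuous_on K h"
    and near: "\<And>x. x \<in> K \<Longrightarrow> norm (h x - x) \<le> \<delta>" and p: "cball p \<delta> \<subseteq> K" and "0 \<le> \<delta>"
  shows "p \<in> h ` K"
proof -
  have "\<exists>y\<in>K. h y = p"
  proof (rule brouwer_surjective[OF K _ h, of "{p}"])
    show "K \<noteq> {}" using p \<open>0 \<le> \<delta>\<close> by auto
    fix x y assume "x \<in> {p}" "y \<in> K"
    then have "dist p (x + (y - h y)) \<le> \<delta>"
      using near[of y] by (simp add: dist_norm norm_minus_commute)
    with p show "x + (y - h y) \<in> K" by auto
  qed simp
  then show ?thesis by force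
qed

lemma not_negligible_image_near_identity_cube:
  fixes h :: "'a::euclidean_space \<Rightarrow> 'a"
  assumes h: "continuous_on (cbox 0 One) h"
    and near: "\<And>x. x \<in> cbox 0 One \<Longrightarrow> norm (h x - x) \<le> 1/4"
  shows "\<not> negligible (h ` cbox 0 One)"
proof
  let ?c = "(1/2) *\<^sub>R (One::'a)"
  have "cball p (1/4) \<subseteq> cbox 0 One" if p: "p \<in> ball ?c (1/4)" for p
  proof
    fix y assume "y \<in> cball p (1/4)"
    with p have "norm (y - ?c) < 1/2" by (simp add: dist_norm norm_minus_commute) norm
    then have *: "\<bar>(y - ?c) \<bullet> i\<bar> < 1/2" if "i \<in> Basis" for i
      using Basis_le_norm[OF that, of "y - ?c"] by linarith
    show "y \<in> cbox 0 One"
      unfolding mem_box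
    proof (intro ballI)
      fix i :: 'a assume i: "i \<in> Basis"
      then have "(y - ?c) \<bullet> i = y \<bullet> i - 1/2" by (simp add: inner_diff_left)
      with *[OF i] have "\<bar>y \<bullet> i - 1/2\<bar> < 1/2" by simp
      with i show "0 \<bullet> i \<le> y \<bullet> i \<and> y \<bullet> i \<le> One \<bullet> i" unfolding abs_less_iff by auto
    qed
  qed
  then have "ball ?c (1/4) \<subseteq> h ` cbox 0 One"
    using mem_image_near_identity[OF _ _ h near] by auto
  moreover assume "negligible (h ` cbox 0 One)"
  ultimately have "negligible (ball ?c (1/4))" by (rule negligible_subset[rotated])
  then show False using open_not_negligible[of "ball ?c (1/4)"] by simp
qed

section \<open>Radial projection onto a cubical grid\<close>

lemma infnorm_le_cart: "(\<And>i. \<bar>(x::real^'n)$i\<bar> \<le> b) \<Longrightarrow> infnorm x \<le> b"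
  unfolding infnorm_cart by (rule cSup_least) auto

lemma infnorm_attained_cart: "\<exists>i. \<bar>(x::real^'n)$i\<bar> = infnorm x"
proof -
  have S: "{\<bar>x$i\<bar> |i. i \<in> UNIV} = range (\<lambda>i. \<bar>x$i\<bar>)" by auto
  have "Sup (range (\<lambda>i. \<bar>x$i\<bar>)) \<in> range (\<lambda>i. \<bar>x$i\<bar>)"
    by (simp add: cSup_eq_Max)
  then show ?thesis unfolding infnorm_cart S by (metis imageE)
qed

definition grid_center :: "real \<Rightarrow> ('n \<Rightarrow> int) \<Rightarrow> real^'n" where
  "grid_center s m = (\<chi> i. s * (of_int (m i) + 1/2))"

definition grid_index :: "real \<Rightarrow> real^'n \<Rightarrow> ('n \<Rightarrow> int)" where
  "grid_index s y = (\<lambda>i. \<lfloor>y$i / s\<rfloor>)"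

definition grid_cell :: "real \<Rightarrow> ('n \<Rightarrow> int) \<Rightarrow> (real^'n) set" where
  "grid_cell s m = {y. \<forall>i. s * of_int (m i) \<le> y$i \<and> y$i \<le> s * (of_int (m i) + 1)}"

text \<open>At \<open>y = z\<close> the division by zero makes this return \<open>z\<close>: the projection is only meaningful
  away from the centre.\<close>

definition cell_radial_projection :: "real \<Rightarrow> real^'n \<Rightarrow> real^'n \<Rightarrow> real^'n" where
  "cell_radial_projection s z y = z + (s / (2 * infnorm (y - z))) *\<^sub>R (y - z)"

definition grid_projection :: "real \<Rightarrow> real^'n \<Rightarrow> real^'n" where
  "grid_projection s y = cell_radial_projection s (grid_center s (grid_index s y)) y"

lemma mem_grid_cell_index:
  assumes "s > 0" shows "y \<in> grid_cell s (grid_index s y)"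
proof -
  have "s * of_int \<lfloor>y$i/s\<rfloor> \<le> y$i \<and> y$i \<le> s * (of_int \<lfloor>y$i/s\<rfloor> + 1)" for i
  proof -
    have "of_int \<lfloor>y$i/s\<rfloor> \<le> y$i/s" "y$i/s \<le> of_int \<lfloor>y$i/s\<rfloor> + 1" by linarith+
    then have "s * of_int \<lfloor>y$i/s\<rfloor> \<le> s * (y$i/s)" "s * (y$i/s) \<le> s * (of_int \<lfloor>y$i/s\<rfloor> + 1)"
      using assms by (intro mult_left_mono; simp)+
    then show ?thesis using assms by simp
  qed
  then show ?thesis by (simp add: grid_cell_def grid_index_def)
qed

lemma grid_index_center:
  assumes "s > 0" shows "grid_index s (grid_center s m) = m"
proof
  fix i
  have "(grid_center s m)$i / s = of_int (m i) + 1/2" using assms by (simp add: grid_center_def)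
  then show "grid_index s (grid_center s m) i = m i" by (simp add: grid_index_def floor_eq_iff)
qed

lemma closed_grid_cell: "closed (grid_cell s m)"
  unfolding grid_cell_def
  by (intro closed_Collect_all closed_Collect_conj closed_Collect_le continuous_intros)

lemma infnorm_grid_cell_le:
  assumes "y \<in> grid_cell s m" shows "infnorm (y - grid_center s m) \<le> s/2"
proof (rule infnorm_le_cart)
  fix i
  have "s * of_int (m i) \<le> y$i" "y$i \<le> s * of_int (m i) + s"
    using assms by (auto simp: grid_cell_def algebra_simps)
  moreover have "(y - grid_center s m)$i = y$i - s * of_int (m i) - s/2"
    by (simp add: grid_center_def algebra_simps)
  ultimately show "\<bar>(y - grid_center s m)$i\<bar> \<le> s/2"
    unfolding abs_le_iff by (intro conjI; linarith)
qed

lemma dist_grid_centers: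
  assumes "m \<noteq> m'" "s > 0" shows "s \<le> dist (grid_center s m) (grid_center s m')"
proof -
  obtain i where "m i \<noteq> m' i" using assms(1) by auto
  then have "1 \<le> \<bar>real_of_int (m i) - of_int (m' i)\<bar>" by linarith
  then have "s \<le> s * \<bar>real_of_int (m i) - of_int (m' i)\<bar>" using assms(2) by simp
  also have "\<dots> = \<bar>(grid_center s m - grid_center s m')$i\<bar>"
  proof -
    have "(grid_center s m - grid_center s m')$i = s * (of_int (m i) - of_int (m' i))"
      by (simp add: grid_center_def algebra_simps)
    then show ?thesis using assms(2) by (simp add: abs_mult)
  qed
  also have "\<dots> \<le> norm (grid_center s m - grid_center s m')" by (rule component_le_norm_cart)
  finally show ?thesis by (simp add: dist_norm)
qed

lemma cell_radial_projection_face: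
  assumes y: "y \<in> grid_cell s m" and s: "s > 0"
    and face: "y$i = s * of_int (m i) \<or> y$i = s * (of_int (m i) + 1)"
  shows "cell_radial_projection s (grid_center s m) y = y"
proof -
  have "\<bar>(y - grid_center s m)$i\<bar> = s/2" using face s by (auto simp: grid_center_def algebra_simps)
  then have "s/2 \<le> infnorm (y - grid_center s m)" by (metis component_le_infnorm_cart)
  then have "infnorm (y - grid_center s m) = s/2" using infnorm_grid_cell_le[OF y] by linarith
  then have "s / (2 * infnorm (y - grid_center s m)) = 1" using s by simp
  then show ?thesis by (simp add: cell_radial_projection_def)
qed

text \<open>On a common face of two cells the two radial projections agree (both are the identity),
  so the cellwise definition glues to a continuous map.\<close>

lemma grid_projection_eq_cell_radial_projection:
  assumes y: "y \<in> grid_cell s m" and s: "s > 0"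
  shows "grid_projection s y = cell_radial_projection s (grid_center s m) y"
proof (cases "grid_index s y = m")
  case True then show ?thesis by (simp add: grid_projection_def)
next
  case False
  then obtain i where i: "\<lfloor>y$i / s\<rfloor> \<noteq> m i" by (auto simp: grid_index_def)
  have "s * of_int (m i) \<le> y$i" "y$i \<le> s * (of_int (m i) + 1)" using y by (auto simp: grid_cell_def)
  then have b: "of_int (m i) \<le> y$i / s" "y$i / s \<le> of_int (m i) + 1" using s by (auto simp: field_simps)
  have eq: "y$i / s = of_int (m i) + 1"
  proof (rule ccontr)
    assume "y$i / s \<noteq> of_int (m i) + 1"
    then have "\<lfloor>y$i / s\<rfloor> = m i" using b by linarith
    then show False using i by simp
  qed
  then have yi: "y$i = s * (of_int (m i) + 1)" using s by (simp add: field_simps)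
  have "grid_projection s y = y"
    unfolding grid_projection_def
    by (rule cell_radial_projection_face[OF mem_grid_cell_index[OF s] s, of _ i])
      (use yi eq in \<open>simp add: grid_index_def\<close>)
  moreover have "cell_radial_projection s (grid_center s m) y = y"
    by (rule cell_radial_projection_face[OF y s, of i]) (use yi in simp)
  ultimately show ?thesis by simp
qed

lemma cell_radial_projection_in_grid_hyperplane:
  assumes "y \<noteq> grid_center s m"
  shows "\<exists>i k. (cell_radial_projection s (grid_center s m) y)$i = s * of_int k"
proof -
  let ?v = "y - grid_center s m"
  obtain i where i: "\<bar>?v$i\<bar> = infnorm ?v" using infnorm_attained_cart by blast
  have pos: "infnorm ?v > 0" using assms by (simp add: infnorm_pos_lt)
  then have vi: "?v$i \<noteq> 0" using i by auto
  have "(s / (2 * infnorm ?v)) * ?v$i = (s / (2 * infnorm ?v)) * (sgn (?v$i) * infnorm ?v)"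
    using i by (metis sgn_mult_abs)
  also have "\<dots> = s/2 * sgn (?v$i)" using pos by (simp add: field_simps)
  finally have "(s / (2 * infnorm ?v)) * ?v$i = s/2 * sgn (?v$i)" .
  then have e: "(cell_radial_projection s (grid_center s m) y)$i
      = s * (of_int (m i) + 1/2) + s/2 * sgn (?v$i)"
    by (simp add: cell_radial_projection_def grid_center_def)
  show ?thesis
  proof (cases "?v$i > 0")
    case True
    with e show ?thesis by (intro exI[of _ i] exI[of _ "m i + 1"]) (simp add: algebra_simps)
  next
    case False
    with vi e show ?thesis by (intro exI[of _ i] exI[of _ "m i"]) (simp add: algebra_simps)
  qed
qed

lemma dist_grid_projection_le:
  fixes y :: "real^'n"
  assumes s: "s > 0" shows "dist (grid_projection s y) y \<le> sqrt (real CARD('n)) * s"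
proof -
  let ?v = "y - grid_center s (grid_index s y)"
  have "infnorm (grid_projection s y - y) \<le> s"
  proof (cases "?v = 0")
    case True then show ?thesis
      using s by (simp add: grid_projection_def cell_radial_projection_def infnorm_0)
  next
    case False
    then have pos: "infnorm ?v > 0" by (simp add: infnorm_pos_lt)
    have "grid_projection s y - y = ((s / (2 * infnorm ?v)) - 1) *\<^sub>R ?v"
      by (simp add: grid_projection_def cell_radial_projection_def algebra_simps)
    then have "infnorm (grid_projection s y - y) = \<bar>s / (2 * infnorm ?v) - 1\<bar> * infnorm ?v"
      by (simp add: infnorm_mul)
    also have "\<dots> = \<bar>s/2 - infnorm ?v\<bar>"
      using pos by (simp add: abs_mult[symmetric] field_simps)
    also have "\<dots> \<le> s"
      using infnorm_grid_cell_le[OF mem_grid_cell_index[OF s, of y]] pos s by linarith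
    finally show ?thesis .
  qed
  then have "sqrt (real CARD('n)) * infnorm (grid_projection s y - y) \<le> sqrt (real CARD('n)) * s"
    by (intro mult_left_mono) auto
  moreover have "norm (grid_projection s y - y) \<le> sqrt (real CARD('n)) * infnorm (grid_projection s y - y)"
    using norm_le_infnorm[of "grid_projection s y - y"] by simp
  ultimately show ?thesis unfolding dist_norm by linarith
qed

lemma finite_grid_index_image:
  assumes s: "s > 0" and "bounded T" shows "finite (grid_index s ` T)"
proof -
  obtain B where B: "\<And>y. y \<in> T \<Longrightarrow> norm y \<le> B"
    using \<open>bounded T\<close> by (auto simp: bounded_iff)
  define N where "N = \<lceil>B/s\<rceil>"
  have "grid_index s y i \<in> {-N..N}" if "y \<in> T" for y i
  proof -
    have "\<bar>y$i\<bar> \<le> B" using component_le_norm_cart[of y i] B[OF that] by linarith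
    then have "-B \<le> y$i" "y$i \<le> B" by linarith+
    then have "-B/s \<le> y$i/s" "y$i/s \<le> B/s" using s by (simp_all only: divide_right_mono less_imp_le)
    moreover have "B/s \<le> of_int N" unfolding N_def by linarith
    ultimately show ?thesis unfolding grid_index_def by (simp add: le_floor_iff floor_le_iff)
  qed
  then have "grid_index s ` T \<subseteq> PiE UNIV (\<lambda>_. {-N..N})" by (auto simp: PiE_UNIV_domain)
  then show ?thesis by (rule finite_subset) (simp add: finite_PiE)
qed

lemma finite_grid_centers_in_cball:
  assumes "s > 0" shows "finite {m. norm (grid_center s m :: real^'n) \<le> B}"
proof (rule finite_subset)
  show "finite (grid_index s ` cball (0::real^'n) B)"
    using finite_grid_index_image[OF assms bounded_cball] .
  show "{m. norm (grid_center s m :: real^'n) \<le> B} \<subseteq> grid_index s ` cball 0 B"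
  proof
    fix m assume "m \<in> {m. norm (grid_center s m :: real^'n) \<le> B}"
    then show "m \<in> grid_index s ` cball 0 B"
      by (intro image_eqI[where x="grid_center s m"]) (simp_all add: grid_index_center assms)
  qed
qed

lemma continuous_on_grid_projection:
  assumes s: "s > 0" and T: "compact T" and miss: "\<And>m. grid_center s m \<notin> T"
  shows "continuous_on T (grid_projection s)"
proof -
  have "T = (\<Union>m\<in>grid_index s ` T. grid_cell s m \<inter> T)"
    using mem_grid_cell_index[OF s] by blast
  moreover have "continuous_on (\<Union>m\<in>grid_index s ` T. grid_cell s m \<inter> T) (grid_projection s)"
  proof (rule continuous_on_closed_Union)
    show "finite (grid_index s ` T)" using finite_grid_index_image[OF s compact_imp_bounded[OF T]] .
    fix m
    show "closed (grid_cell s m \<inter> T)" by (intro closed_Int closed_grid_cell compact_imp_closed T)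
    have "continuous_on (grid_cell s m \<inter> T) (cell_radial_projection s (grid_center s m))"
      unfolding cell_radial_projection_def
      by (intro continuous_intros) (use miss in \<open>auto simp: infnorm_eq_0\<close>)
    then show "continuous_on (grid_cell s m \<inter> T) (grid_projection s)"
      by (rule continuous_on_eq) (use grid_projection_eq_cell_radial_projection[OF _ s] in force)
  qed
  ultimately show ?thesis by simp
qed

lemma negligible_coordinate_hyperplane: "negligible {v::real^'n. v$i = c}"
proof -
  have "{v::real^'n. v$i = c} = {v. axis i 1 \<bullet> v = c}" by (simp add: inner_axis')
  then show ?thesis using negligible_hyperplane[of "axis i (1::real)"] by (simp add: axis_eq_0_iff)
qed

lemma negligible_grid_projection_image:
  fixes T :: "(real^'n) set"
  assumes miss: "\<And>m. grid_center s m \<notin> T"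
  shows "negligible (grid_projection s ` T)"
proof (rule negligible_subset)
  let ?H = "(\<lambda>(i, k). {v::real^'n. v$i = s * of_int k}) ` (UNIV \<times> (UNIV::int set))"
  show "negligible (\<Union>?H)"
  proof (rule negligible_countable_Union)
    show "countable ?H" by (intro countable_image countable_SIGMA) (auto intro: countable_finite)
  qed (auto intro: negligible_coordinate_hyperplane)
  show "grid_projection s ` T \<subseteq> \<Union>?H"
  proof
    fix v assume "v \<in> grid_projection s ` T"
    then obtain y where y: "y \<in> T" "v = grid_projection s y" by blast
    then have "y \<noteq> grid_center s (grid_index s y)" using miss[of "grid_index s y"] by auto
    then obtain i k where "v$i = s * of_int k"
      using cell_radial_projection_in_grid_hyperplane y(2) unfolding grid_projection_def by blast
    then show "v \<in> \<Union>?H" by blast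
  qed
qed

section \<open>Approximating maps without stable values\<close>

lemma not_stable_valueE:
  assumes "\<not> stable_value X f z" "e > 0"
  obtains g where "continuous_on X g" "\<And>x. x \<in> X \<Longrightarrow> dist (g x) (f x) < e"
    "\<And>x. x \<in> X \<Longrightarrow> g x \<noteq> z"
proof -
  from assms have "\<not> (\<forall>g. continuous_on X g \<and> bdd_above ((\<lambda>x. dist (f x) (g x)) ` X)
                  \<and> (SUP x\<in>X. dist (f x) (g x)) < e \<longrightarrow> z \<in> g ` X)"
    unfolding stable_value_def by auto
  then obtain g where g: "continuous_on X g" "bdd_above ((\<lambda>x. dist (f x) (g x)) ` X)"
      "(SUP x\<in>X. dist (f x) (g x)) < e" "z \<notin> g ` X"
    by auto
  show ?thesis
  proof (rule that[OF g(1)])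
    show "dist (g x) (f x) < e" if "x \<in> X" for x
      using cSUP_upper[OF that g(2)] g(3) by (simp add: dist_commute)
    show "g x \<noteq> z" if "x \<in> X" for x
      using g(4) imageI[OF that, of g] by auto
  qed
qed

text \<open>The perturbation towards \<open>g\<^sub>z - f\<close> is switched on only where \<open>f\<close> is within \<open>s/8\<close>
  of \<open>z\<close> and off beyond \<open>s/4\<close>; since \<open>Z\<close> is \<open>s\<close>-separated, at most one of them acts at each point.\<close>

lemma perturbation_avoiding_separated_points:
  fixes f :: "'a::topological_space \<Rightarrow> 'b::real_normed_vector"
  assumes Z: "finite Z" and sep: "\<And>z z'. z \<in> Z \<Longrightarrow> z' \<in> Z \<Longrightarrow> z \<noteq> z' \<Longrightarrow> s \<le> dist z z'"
    and \<eta>: "0 < \<eta>" "\<eta> \<le> s/8" and f: "continuous_on K f"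
    and avoid: "\<And>z. z \<in> Z \<Longrightarrow> \<exists>g. continuous_on K g \<and> (\<forall>x\<in>K. dist (g x) (f x) < \<eta> \<and> g x \<noteq> z)"
  obtains F where "continuous_on K F" "\<And>x. x \<in> K \<Longrightarrow> dist (F x) (f x) < \<eta>"
    "\<And>x. x \<in> K \<Longrightarrow> F x \<notin> Z"
proof -
  from avoid have "\<forall>z\<in>Z. \<exists>g. continuous_on K g \<and> (\<forall>x\<in>K. dist (g x) (f x) < \<eta> \<and> g x \<noteq> z)"
    by (intro ballI)
  from bchoice[OF this] obtain G where
    "\<forall>z\<in>Z. continuous_on K (G z) \<and> (\<forall>x\<in>K. dist (G z x) (f x) < \<eta> \<and> G z x \<noteq> z)"
    by blast
  then have G: "\<And>z. z \<in> Z \<Longrightarrow> continuous_on K (G z)"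
      "\<And>z x. z \<in> Z \<Longrightarrow> x \<in> K \<Longrightarrow> dist (G z x) (f x) < \<eta>"
      "\<And>z x. z \<in> Z \<Longrightarrow> x \<in> K \<Longrightarrow> G z x \<noteq> z"
    by blast+
  have s: "s > 0" using \<eta> by linarith
  define \<phi> where "\<phi> t = max 0 (min 1 (2 - 8*t/s))" for t :: real
  have \<phi>01: "0 \<le> \<phi> t" "\<phi> t \<le> 1" for t by (auto simp: \<phi>_def)
  have \<phi>0: "\<phi> t = 0" if "s/4 \<le> t" for t using that s by (auto simp: \<phi>_def field_simps)
  have \<phi>1: "\<phi> t = 1" if "t \<le> s/8" for t using that s by (auto simp: \<phi>_def field_simps)
  define F where "F x = f x + (\<Sum>z\<in>Z. \<phi> (dist (f x) z) *\<^sub>R (G z x - f x))" for x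
  have "continuous_on K F"
    unfolding F_def \<phi>_def using s by (intro continuous_intros f G(1)) auto
  moreover have "dist (F x) (f x) < \<eta> \<and> F x \<notin> Z" if x: "x \<in> K" for x
  proof (cases "\<exists>z0\<in>Z. dist (f x) z0 < s/4")
    case True
    then obtain z0 where z0: "z0 \<in> Z" "dist (f x) z0 < s/4" by blast
    have others: "\<phi> (dist (f x) z) = 0" if "z \<in> Z" "z \<noteq> z0" for z
    proof (rule \<phi>0)
      have "s \<le> dist z0 z" using sep[OF z0(1) that(1)] that(2) by auto
      also have "\<dots> \<le> dist (f x) z0 + dist (f x) z" by (rule dist_triangle3)
      finally show "s/4 \<le> dist (f x) z" using z0 s by linarith
    qed
    have Fx: "F x = f x + \<phi> (dist (f x) z0) *\<^sub>R (G z0 x - f x)"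
      using others by (simp add: F_def sum.remove[OF Z z0(1)] sum.neutral)
    have close: "dist (F x) (f x) < \<eta>"
    proof -
      have "dist (F x) (f x) = \<phi> (dist (f x) z0) * dist (G z0 x) (f x)"
        using \<phi>01 by (simp add: Fx dist_norm)
      also have "\<dots> \<le> dist (G z0 x) (f x)"
        using \<phi>01 by (simp add: mult_left_le_one_le)
      also have "\<dots> < \<eta>" using G(2)[OF z0(1) x] .
      finally show ?thesis .
    qed
    have "F x \<noteq> z" if z: "z \<in> Z" for z
    proof (cases "dist (f x) z \<le> s/8")
      case True
      then have "z = z0" using others[OF z] \<phi>1 by force
      then show ?thesis using True \<phi>1 G(3)[OF z x] by (simp add: Fx)
    next
      case False
      have "dist (f x) z \<le> dist (F x) (f x) + dist (F x) z" by (rule dist_triangle3)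
      then show ?thesis using False close \<eta> by auto
    qed
    with close show ?thesis by blast
  next
    case False
    then have "F x = f x" by (simp add: F_def \<phi>0 not_less)
    with False \<eta> s show ?thesis by auto
  qed
  ultimately show ?thesis using that by blast
qed

lemma approximation_avoiding_grid_centers:
  fixes f :: "'a::metric_space \<Rightarrow> real^'n"
  assumes K: "compact K" and f: "continuous_on K f" and unstable: "\<And>z. \<not> stable_value K f z"
    and s: "0 < s" and \<eta>: "0 < \<eta>" "\<eta> \<le> s/8" "\<eta> \<le> 1"
  obtains F where "continuous_on K F" "\<And>x. x \<in> K \<Longrightarrow> dist (F x) (f x) < \<eta>"
    "\<And>m. grid_center s m \<notin> F ` K"
proof -
  obtain R where R: "\<And>x. x \<in> K \<Longrightarrow> norm (f x) \<le> R"
    using compact_imp_bounded[OF compact_continuous_image[OF f K]] by (auto simp: bounded_iff)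
  define Z where "Z = grid_center s ` {m :: 'n \<Rightarrow> int. norm (grid_center s m) \<le> R + 1}"
  have finZ: "finite Z" unfolding Z_def by (rule finite_imageI[OF finite_grid_centers_in_cball[OF s]])
  have sepZ: "s \<le> dist z z'" if z: "z \<in> Z" "z' \<in> Z" and "z \<noteq> z'" for z z'
  proof -
    obtain m m' where mm: "z = grid_center s m" "z' = grid_center s m'" using z by (auto simp: Z_def)
    with \<open>z \<noteq> z'\<close> have "m \<noteq> m'" by auto
    then show ?thesis unfolding mm by (rule dist_grid_centers[OF _ s])
  qed
  have avoid: "\<exists>g. continuous_on K g \<and> (\<forall>x\<in>K. dist (g x) (f x) < \<eta> \<and> g x \<noteq> z)" for z
  proof (rule not_stable_valueE[OF unstable[of z] \<eta>(1)])
    fix g assume "continuous_on K g" "\<And>x. x \<in> K \<Longrightarrow> dist (g x) (f x) < \<eta>"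
      "\<And>x. x \<in> K \<Longrightarrow> g x \<noteq> z"
    then show ?thesis by (intro exI[of _ g]) simp
  qed
  obtain F where F: "continuous_on K F" "\<And>x. x \<in> K \<Longrightarrow> dist (F x) (f x) < \<eta>"
    "\<And>x. x \<in> K \<Longrightarrow> F x \<notin> Z"
    by (rule perturbation_avoiding_separated_points[OF finZ sepZ \<eta>(1,2) f avoid])
      (assumption | rule that)+
  have "grid_center s m \<notin> F ` K" for m
  proof
    assume "grid_center s m \<in> F ` K"
    then obtain x where x: "x \<in> K" "F x = grid_center s m" by auto
    have "norm (F x) \<le> norm (f x) + dist (F x) (f x)" by (simp add: dist_norm norm_triangle_sub)
    then have "norm (F x) \<le> R + 1" using R[OF x(1)] F(2)[OF x(1)] \<eta>(3) by linarith
    then have "F x \<in> Z" using x(2) by (auto simp: Z_def)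
    with F(3)[OF x(1)] show False by blast
  qed
  with F(1,2) show ?thesis by (rule that)
qed

lemma approximation_with_negligible_image:
  fixes f :: "'a::metric_space \<Rightarrow> real^'n"
  assumes K: "compact K" and f: "continuous_on K f" and unstable: "\<And>z. \<not> stable_value K f z"
    and e: "e > 0"
  obtains F where "continuous_on K F" "\<And>x. x \<in> K \<Longrightarrow> dist (F x) (f x) < e" "negligible (F ` K)"
proof -
  define s where "s = e / (2 * (sqrt (real CARD('n)) + 1))"
  have s: "0 < s" "sqrt (real CARD('n)) * s \<le> e/2" "s \<le> e/2"
  proof -
    have pos: "0 < sqrt (real CARD('n)) + 1" by (simp add: add_nonneg_pos)
    then have "sqrt (real CARD('n)) * s = (e/2) * (sqrt (real CARD('n)) / (sqrt (real CARD('n)) + 1))"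
      by (simp add: s_def field_simps)
    also have "\<dots> \<le> e/2" using e pos by (intro mult_left_le) (auto simp: divide_le_eq_1)
    finally show "sqrt (real CARD('n)) * s \<le> e/2" .
    show "0 < s" "s \<le> e/2" using e pos by (auto simp: s_def field_simps)
  qed
  have \<eta>: "0 < min (s/8) 1" "min (s/8) 1 \<le> s/8" "min (s/8) 1 \<le> 1" using s by auto
  obtain F0 where F0: "continuous_on K F0" "\<And>x. x \<in> K \<Longrightarrow> dist (F0 x) (f x) < min (s/8) 1"
    and miss: "\<And>m. grid_center s m \<notin> F0 ` K"
    by (rule approximation_avoiding_grid_centers[OF K f unstable s(1) \<eta>]) (rule that)
  show ?thesis
  proof (rule that)
    show "continuous_on K (grid_projection s \<circ> F0)"
      using continuous_on_grid_projection[OF s(1) compact_continuous_image[OF F0(1) K] miss]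
      by (rule continuous_on_compose[OF F0(1)])
    show "negligible ((grid_projection s \<circ> F0) ` K)"
      unfolding image_comp[symmetric] by (rule negligible_grid_projection_image[OF miss])
    fix x assume x: "x \<in> K"
    have "dist (grid_projection s (F0 x)) (f x) \<le> dist (grid_projection s (F0 x)) (F0 x) + dist (F0 x) (f x)"
      by (rule dist_triangle)
    moreover have "dist (grid_projection s (F0 x)) (F0 x) \<le> e/2"
      using dist_grid_projection_le[OF s(1), of "F0 x"] s(2) by linarith
    moreover have "dist (F0 x) (f x) < e/2" using F0(2)[OF x] s(1,3) by linarith
    ultimately show "dist ((grid_projection s \<circ> F0) x) (f x) < e" by simp
  qed
qed

text \<open>A Lebesgue number for the open cover \<open>{U \<times> - f(\<partial>U \<inter> K) | U \<in> \<U>}\<close> of \<open>K \<times> C\<close>.\<close>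

lemma uniform_frontier_separation:
  fixes f :: "'a::metric_space \<Rightarrow> 'b::metric_space"
  assumes K: "compact K" and C: "compact C" and f: "continuous_on K f"
    and opn: "\<And>U. U \<in> \<U> \<Longrightarrow> open U"
    and avoid: "\<forall>x\<in>K. \<exists>\<I>\<subseteq>\<U>. (\<forall>U\<in>\<I>. x \<in> U) \<and> (\<Inter>U\<in>\<I>. f ` (frontier U \<inter> K)) = {}"
  obtains e where "e > 0"
    "\<And>x y. x \<in> K \<Longrightarrow> y \<in> C \<Longrightarrow> \<exists>U\<in>\<U>. x \<in> U \<and> (\<forall>x'\<in>K \<inter> frontier U. e \<le> dist (f x') y)"
proof -
  define B where "B U = f ` (frontier U \<inter> K)" for U
  have "closed (B U)" for U
  proof -
    have "compact (frontier U \<inter> K)" by (rule closed_Int_compact[OF frontier_closed K])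
    then show ?thesis unfolding B_def
      by (intro compact_imp_closed compact_continuous_image continuous_on_subset[OF f]) auto
  qed
  then have opG: "open G" if "G \<in> (\<lambda>U. U \<times> - B U) ` \<U>" for G
    using that opn by (auto intro: open_Times)
  have cover: "K \<times> C \<subseteq> \<Union>((\<lambda>U. U \<times> - B U) ` \<U>)"
  proof
    fix p assume "p \<in> K \<times> C"
    then obtain x y where p: "p = (x, y)" "x \<in> K" by blast
    obtain \<I> where \<I>: "\<I> \<subseteq> \<U>" "\<forall>U\<in>\<I>. x \<in> U" "(\<Inter>U\<in>\<I>. B U) = {}"
      using bspec[OF avoid p(2)] unfolding B_def by blast
    then obtain U where "U \<in> \<I>" "y \<notin> B U" by blast
    then show "p \<in> \<Union>((\<lambda>U. U \<times> - B U) ` \<U>)" using \<I> p(1) by blast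
  qed
  obtain e where e: "0 < e" "\<And>p. p \<in> K \<times> C \<Longrightarrow> \<exists>G\<in>(\<lambda>U. U \<times> - B U) ` \<U>. ball p e \<subseteq> G"
    using Heine_Borel_lemma[OF compact_Times[OF K C] cover opG] by blast
  show ?thesis
  proof (rule that[OF e(1)])
    fix x y assume "x \<in> K" "y \<in> C"
    then obtain U where U: "U \<in> \<U>" "ball (x, y) e \<subseteq> U \<times> - B U" using e(2)[of "(x, y)"] by blast
    have "(x, y) \<in> ball (x, y) e" using e(1) by simp
    then have "x \<in> U" using U(2) by blast
    moreover have "e \<le> dist (f x') y" if x': "x' \<in> K \<inter> frontier U" for x'
    proof (rule ccontr)
      assume "\<not> e \<le> dist (f x') y"
      then have "(x, f x') \<in> ball (x, y) e" by (simp add: dist_Pair_Pair dist_commute)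
      then have "f x' \<notin> B U" using U(2) by blast
      with x' show False by (auto simp: B_def)
    qed
    ultimately show "\<exists>U\<in>\<U>. x \<in> U \<and> (\<forall>x'\<in>K \<inter> frontier U. e \<le> dist (f x') y)" using U(1) by blast
  qed
qed

lemma frontier_separation_perturb:
  assumes sep: "\<And>y. y \<in> C \<Longrightarrow> \<exists>U\<in>\<U>. x \<in> U \<and> (\<forall>x'\<in>K \<inter> frontier U. e \<le> dist (f x') y)"
    and close: "\<And>x'. x' \<in> K \<Longrightarrow> dist (F x') (f x') \<le> e/2" and "y \<in> C"
  shows "\<exists>U\<in>\<U>. x \<in> U \<and> (\<forall>x'\<in>K \<inter> frontier U. e/2 \<le> dist (F x') y)"
proof -
  obtain U where U: "U \<in> \<U>" "x \<in> U" and far: "\<And>x'. x' \<in> K \<inter> frontier U \<Longrightarrow> e \<le> dist (f x') y"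
    using sep[OF \<open>y \<in> C\<close>] by blast
  have "e/2 \<le> dist (F x') y" if x': "x' \<in> K \<inter> frontier U" for x'
  proof -
    have "dist (f x') y \<le> dist (F x') (f x') + dist (F x') y" by (rule dist_triangle3)
    moreover have "dist (F x') (f x') \<le> e/2" using x' close by blast
    ultimately show ?thesis using far[OF x'] by linarith
  qed
  with U show ?thesis by blast
qed

lemma exists_stable_value_cube:
  fixes f :: "real^'n \<Rightarrow> real^'n"
  assumes small: "\<And>U. U \<in> \<U> \<Longrightarrow> open U \<and> bounded U \<and> diameter U \<le> 1/4"
    and f: "continuous_on (cbox 0 One) f"
    and avoid: "\<forall>x\<in>cbox 0 One. \<exists>\<I>\<subseteq>\<U>. (\<forall>U\<in>\<I>. x \<in> U) \<and>
                  (\<Inter>U\<in>\<I>. f ` (frontier U \<inter> cbox 0 One)) = {}"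
  shows "\<exists>z. stable_value (cbox 0 One) f z"
proof (rule ccontr)
  let ?K = "cbox 0 (One :: real^'n)"
  assume "\<nexists>z. stable_value ?K f z"
  then have unstable: "\<And>z. \<not> stable_value ?K f z" by blast
  obtain R where R: "\<And>x. x \<in> ?K \<Longrightarrow> norm (f x) \<le> R"
    using compact_imp_bounded[OF compact_continuous_image[OF f compact_cbox]] by (auto simp: bounded_iff)
  obtain e where e: "0 < e" "\<And>x y. x \<in> ?K \<Longrightarrow> y \<in> cball 0 (R + 1) \<Longrightarrow>
      \<exists>U\<in>\<U>. x \<in> U \<and> (\<forall>x'\<in>?K \<inter> frontier U. e \<le> dist (f x') y)"
    by (rule uniform_frontier_separation[OF compact_cbox compact_cball f _ avoid])
      (use small in blast, rule that)
  obtain F where F: "continuous_on ?K F" "\<And>x. x \<in> ?K \<Longrightarrow> dist (F x) (f x) < min (e/2) 1"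
    "negligible (F ` ?K)"
    by (rule approximation_with_negligible_image[OF compact_cbox f unstable, of "min (e/2) 1"])
      (use e(1) in simp, rule that)
  have "F x \<in> cball 0 (R + 1)" if "x \<in> ?K" for x
    using R[OF that] F(2)[OF that] norm_triangle_sub[of "F x" "f x"] by (simp add: dist_norm)
  then have "\<exists>U\<in>\<U>. x \<in> U \<and> (\<forall>x'\<in>?K \<inter> frontier U. e/2 \<le> dist (F x') y)"
    if "x \<in> ?K" "y \<in> F ` ?K" for x y
    using that F(2) by (intro frontier_separation_perturb[OF e(2)]) (auto simp: less_imp_le)
  then obtain h where "continuous_on ?K h" "\<And>x. x \<in> ?K \<Longrightarrow> norm (h x - x) \<le> 1/4"
    "negligible (h ` ?K)"
    using near_identity_map_with_negligible_image[OF compact_cbox convex_box(1) F(1,3), of "e/2" \<U> "1/4"]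
      e(1) small by force
  then show False using not_negligible_image_near_identity_cube by blast
qed

theorem mainTheorem6:
  "\<exists>\<epsilon>>0. \<forall>(\<U> :: (real ^ 'n) set set) (f :: real ^ 'n \<Rightarrow> real ^ 'n).
     (\<forall>U\<in>\<U>. open U \<and> bounded U \<and> diameter U < \<epsilon>) \<and>
     cbox 0 One \<subseteq> \<Union>\<U> \<and>
     continuous_on (cbox 0 One) f \<and>
     (\<forall>x\<in>cbox 0 One. \<exists>\<I>\<subseteq>\<U>. (\<forall>U\<in>\<I>. x \<in> U) \<and>
         (\<Inter>U\<in>\<I>. f ` (frontier U \<inter> cbox 0 One)) = {})
     \<longrightarrow> (\<exists>z. stable_value (cbox 0 One) f z)"
proof (intro exI[of _ "1/4"] conjI allI impI)
  fix \<U> :: "(real ^ 'n) set set" and f :: "real ^ 'n \<Rightarrow> real ^ 'n"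
  assume hyps: "(\<forall>U\<in>\<U>. open U \<and> bounded U \<and> diameter U < 1/4) \<and> cbox 0 One \<subseteq> \<Union>\<U> \<and>
     continuous_on (cbox 0 One) f \<and> (\<forall>x\<in>cbox 0 One. \<exists>\<I>\<subseteq>\<U>. (\<forall>U\<in>\<I>. x \<in> U) \<and>
         (\<Inter>U\<in>\<I>. f ` (frontier U \<inter> cbox 0 One)) = {})"
  have small: "\<forall>U\<in>\<U>. open U \<and> bounded U \<and> diameter U < 1/4" using hyps by (elim conjE)
  have f: "continuous_on (cbox 0 One) f" using hyps by (elim conjE)
  have avoid: "\<forall>x\<in>cbox 0 One. \<exists>\<I>\<subseteq>\<U>. (\<forall>U\<in>\<I>. x \<in> U) \<and>
      (\<Inter>U\<in>\<I>. f ` (frontier U \<inter> cbox 0 One)) = {}"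
    using hyps by (elim conjE)
  show "\<exists>z. stable_value (cbox 0 One) f z"
  proof (rule exists_stable_value_cube[OF _ f avoid])
    show "open U \<and> bounded U \<and> diameter U \<le> 1/4" if "U \<in> \<U>" for U
      using bspec[OF small that] by auto
  qed
qed simp

end
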